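(* For every $k\ge0$ and every $j\in\{1,\dots,d\}$, the assignment $e_{(\gamma_1,\dots,\gamma_k)}\mapsto e_{(\gamma_1,\dots,\gamma_k,j)}$, $(\gamma_1,\dots,\gamma_k)\in\Lambda_k$, extends to a well-defined linear isometric embedding $J\colon\mathcal F_k\to\mathcal F_{k+1}$; equivalently, for all $\beta,\gamma\in\Lambda_k$, \[ (e_{(\beta_1,\dots,\beta_k,j)},e_{(\gamma_1,\dots,\gamma_k,j)})_{\mathcal F}=(e_\beta,e_\gamma)_{\mathcal F}. \]
   Context: Fix $d\ge 2$ and complex numbers $q_{ij}$, $1\le i\ne j\le d$, with $|q_{ij}|<1$ and $q_{ij}=\overline{q_{ji}}$. Let $W$ be the universal $C^*$-algebra generated by $s_1,\dots,s_d$ subject to $s_i^*s_i=I$ and $s_i^*s_j=q_{ij}s_js_i^*$ for $i\ne j$. Let $\Lambda_m=\{1,\dots,d\}^m$ (with $\Lambda_0=\{\emptyset\}$), $\Lambda^0=\bigcup_m\Lambda_m$; for finite $\alpha$, $s_\alpha=s_{\alpha_1}\cdots s_{\alpha_m}$, $s_\emptyset=I$. The Fock representation $\pi_F$ of $W$ acts on a Hilbert space $\mathcal F$ with unit vector $\Omega$ such that $\pi_F(s_j)^*\Omega=0$ for all $j$ and the vectors $e_\alpha=\pi_F(s_\alpha)\Omega$, $\alpha\in\Lambda^0$, span a dense subspace; $\mathcal F_k=\mathrm{span}\{e_\alpha:\alpha\in\Lambda_k\}$. *)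

theory Defs
  imports Complex_Main
begin

text \<open>Complex Hilbert spaces are not available in the distribution, so we describe one
  explicitly: a type 'h carrying an additive group structure, a complex scalar
  multiplication sm and an inner product ip (conjugate-linear in the first argument,
  linear in the second).\<close>

definition complex_inner_space ::
  "(complex \<Rightarrow> 'h::ab_group_add \<Rightarrow> 'h) \<Rightarrow> ('h \<Rightarrow> 'h \<Rightarrow> complex) \<Rightarrow> bool" where
  "complex_inner_space sm ip \<longleftrightarrow>
     (\<forall>a x y. sm a (x + y) = sm a x + sm a y) \<and>
     (\<forall>a b x. sm (a + b) x = sm a x + sm b x) \<and>
     (\<forall>a b x. sm a (sm b x) = sm (a * b) x) \<and>
     (\<forall>x. sm 1 x = x) \<and>
     (\<forall>x y z. ip x (y + z) = ip x y + ip x z) \<and>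
     (\<forall>a x y. ip x (sm a y) = a * ip x y) \<and>
     (\<forall>x y. ip y x = cnj (ip x y)) \<and>
     (\<forall>x. 0 \<le> Re (ip x x)) \<and>
     (\<forall>x. ip x x = 0 \<longrightarrow> x = 0)"

definition hnorm :: "('h \<Rightarrow> 'h \<Rightarrow> complex) \<Rightarrow> 'h \<Rightarrow> real" where
  "hnorm ip x = sqrt (Re (ip x x))"

definition complex_hilbert_space ::
  "(complex \<Rightarrow> 'h::ab_group_add \<Rightarrow> 'h) \<Rightarrow> ('h \<Rightarrow> 'h \<Rightarrow> complex) \<Rightarrow> bool" where
  "complex_hilbert_space sm ip \<longleftrightarrow> complex_inner_space sm ip \<and>
     (\<forall>X :: nat \<Rightarrow> 'h.
        (\<forall>\<epsilon>>0. \<exists>N. \<forall>m\<ge>N. \<forall>n\<ge>N. hnorm ip (X m - X n) < \<epsilon>) \<longrightarrow>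
        (\<exists>L. (\<lambda>n. hnorm ip (X n - L)) \<longlonglongrightarrow> 0))"

definition bounded_op_with_adjoint ::
  "(complex \<Rightarrow> 'h::ab_group_add \<Rightarrow> 'h) \<Rightarrow> ('h \<Rightarrow> 'h \<Rightarrow> complex) \<Rightarrow> ('h \<Rightarrow> 'h) \<Rightarrow> ('h \<Rightarrow> 'h) \<Rightarrow> bool" where
  "bounded_op_with_adjoint sm ip T Tadj \<longleftrightarrow>
     (\<forall>x y. T (x + y) = T x + T y) \<and> (\<forall>a x. T (sm a x) = sm a (T x)) \<and>
     (\<exists>C. \<forall>x. hnorm ip (T x) \<le> C * hnorm ip x) \<and>
     (\<forall>x y. ip (T x) y = ip x (Tadj y))"

definition hspan :: "(complex \<Rightarrow> 'h::ab_group_add \<Rightarrow> 'h) \<Rightarrow> 'h set \<Rightarrow> 'h set" where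
  "hspan sm S = {x. \<exists>F c. finite F \<and> F \<subseteq> S \<and> x = (\<Sum>v\<in>F. sm (c v) v)}"

definition hdense :: "('h::ab_group_add \<Rightarrow> 'h \<Rightarrow> complex) \<Rightarrow> 'h set \<Rightarrow> bool" where
  "hdense ip A \<longleftrightarrow> (\<forall>x. \<forall>\<epsilon>>0. \<exists>y\<in>A. hnorm ip (x - y) < \<epsilon>)"

text \<open>Multi-indices are lists over {1..d}; s_alpha = s_{alpha_1} ... s_{alpha_m}, so
  e_alpha = S alpha_1 (S alpha_2 (... (S alpha_m Omega))).\<close>
definition fock_vec :: "(nat \<Rightarrow> 'h \<Rightarrow> 'h) \<Rightarrow> 'h \<Rightarrow> nat list \<Rightarrow> 'h" where
  "fock_vec S \<Omega> \<alpha> = foldr S \<alpha> \<Omega>"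

definition Lambda :: "nat \<Rightarrow> nat \<Rightarrow> nat list set" where
  "Lambda d m = {\<alpha>. length \<alpha> = m \<and> set \<alpha> \<subseteq> {1..d}}"

end

theory Submission
  imports Defs "HOL-Library.Multiset"
begin

text \<open>Moving S_b^* to the right through e_\<gamma> = S_{\<gamma>_1} \<dots> S_{\<gamma>_k} \<Omega>, each letter c \<noteq> b
  contributes a factor q b c, the first occurrence of b is cancelled by S_b^* S_b = I, and if b
  does not occur the vacuum kills the term. So S_b^* e_\<gamma> is a single scalar multiple of
  e_{\<gamma> without its first b}, which makes the vectors e_\<gamma> for distinct multisets of letters
  orthogonal, and gives a recursion for (e_\<beta>, e_\<gamma>) on the first letter of \<beta>. Appending j
  to both words does not change the prefix before the first b unless b occurs only in the
  appended letter, and that exceptional term vanishes by orthogonality; induction on the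
  length finishes the proof.\<close>

locale q_commuting_isometries =
  fixes d :: nat and q :: "nat \<Rightarrow> nat \<Rightarrow> complex"
    and sm :: "complex \<Rightarrow> 'h::ab_group_add \<Rightarrow> 'h" and ip :: "'h \<Rightarrow> 'h \<Rightarrow> complex"
    and S Sadj :: "nat \<Rightarrow> 'h \<Rightarrow> 'h" and \<Omega> :: 'h
  assumes inner: "complex_inner_space sm ip"
    and ops: "\<And>i. i \<in> {1..d} \<Longrightarrow> bounded_op_with_adjoint sm ip (S i) (Sadj i)"
    and isom: "\<And>i x. i \<in> {1..d} \<Longrightarrow> Sadj i (S i x) = x"
    and comm: "\<And>i j x. i \<in> {1..d} \<Longrightarrow> j \<in> {1..d} \<Longrightarrow> i \<noteq> j \<Longrightarrow>
                 Sadj i (S j x) = sm (q i j) (S j (Sadj i x))"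
    and vac: "\<And>j. j \<in> {1..d} \<Longrightarrow> Sadj j \<Omega> = 0"
begin

abbreviation e :: "nat list \<Rightarrow> 'h" where "e \<equiv> fock_vec S \<Omega>"

lemma sm_add: "sm a (x + y) = sm a x + sm a y"
  using inner unfolding complex_inner_space_def by blast

lemma sm_sm: "sm a (sm b x) = sm (a * b) x"
  using inner unfolding complex_inner_space_def by blast

lemma sm_zero: "sm a 0 = 0"
  using sm_add[of a 0 0] by simp

lemma ip_add: "ip x (y + z) = ip x y + ip x z"
  using inner unfolding complex_inner_space_def by blast

lemma ip_sm: "ip x (sm a y) = a * ip x y"
  using inner unfolding complex_inner_space_def by blast

lemma ip_cnj: "ip y x = cnj (ip x y)"
  using inner unfolding complex_inner_space_def by blast

lemma ip_zero: "ip x 0 = 0"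
  using ip_add[of x 0 0] by simp

lemma S_add: "i \<in> {1..d} \<Longrightarrow> S i (x + y) = S i x + S i y"
  using ops unfolding bounded_op_with_adjoint_def by blast

lemma S_sm: "i \<in> {1..d} \<Longrightarrow> S i (sm a x) = sm a (S i x)"
  using ops unfolding bounded_op_with_adjoint_def by blast

lemma S_zero: "i \<in> {1..d} \<Longrightarrow> S i 0 = 0"
  using S_add[of i 0 0] by simp

lemma ip_S_left: "i \<in> {1..d} \<Longrightarrow> ip (S i x) y = ip x (Sadj i y)"
  using ops unfolding bounded_op_with_adjoint_def by blast

lemma fock_vec_Cons: "e (c # \<gamma>) = S c (e \<gamma>)"
  by (simp add: fock_vec_def)

lemma Sadj_fock_vec:
  assumes "b \<in> {1..d}" and "set \<gamma> \<subseteq> {1..d}"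
  shows "Sadj b (e \<gamma>) =
    (if b \<in> set \<gamma> then sm (prod_list (map (q b) (takeWhile (\<lambda>c. c \<noteq> b) \<gamma>))) (e (remove1 b \<gamma>))
     else 0)"
  using assms(2)
proof (induction \<gamma>)
  case Nil
  then show ?case by (simp add: fock_vec_def vac[OF assms(1)])
next
  case (Cons c \<gamma>)
  then have c: "c \<in> {1..d}" by simp
  show ?case
  proof (cases "c = b")
    case True
    then show ?thesis
      using inner c by (simp add: fock_vec_Cons isom complex_inner_space_def)
  next
    case False
    have "Sadj b (e (c # \<gamma>)) = sm (q b c) (S c (Sadj b (e \<gamma>)))"
      using False assms(1) c by (simp add: fock_vec_Cons comm)
    then show ?thesis
      using Cons False c by (simp add: S_sm sm_sm S_zero sm_zero fock_vec_Cons)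
  qed
qed

lemma ip_fock_vec_Cons:
  assumes "set (b # \<beta>) \<subseteq> {1..d}" and "set \<gamma> \<subseteq> {1..d}"
  shows "ip (e (b # \<beta>)) (e \<gamma>) =
    (if b \<in> set \<gamma> then prod_list (map (q b) (takeWhile (\<lambda>c. c \<noteq> b) \<gamma>)) * ip (e \<beta>) (e (remove1 b \<gamma>))
     else 0)"
  using assms by (simp add: fock_vec_Cons ip_S_left Sadj_fock_vec ip_sm ip_zero)

lemma fock_vec_orthogonal:
  assumes "set \<beta> \<subseteq> {1..d}" and "set \<gamma> \<subseteq> {1..d}" and "mset \<beta> \<noteq> mset \<gamma>"
  shows "ip (e \<beta>) (e \<gamma>) = 0"
  using assms
proof (induction \<beta> arbitrary: \<gamma>)
  case Nil
  then obtain c \<gamma>' where \<gamma>: "\<gamma> = c # \<gamma>'" and c: "c \<in> {1..d}"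
    by (cases \<gamma>) auto
  have "ip \<Omega> (S c (e \<gamma>')) = cnj (ip (e \<gamma>') (Sadj c \<Omega>))"
    by (simp add: ip_cnj[of \<Omega>] ip_S_left[OF c])
  then show ?case
    by (simp add: \<gamma> fock_vec_Cons vac[OF c] ip_zero fock_vec_def)
next
  case (Cons b \<beta>)
  show ?case
  proof (cases "b \<in> set \<gamma>")
    case True
    have "mset \<beta> \<noteq> mset (remove1 b \<gamma>)"
      using Cons.prems(3) True by (auto simp: mset_remove1)
    moreover have "set (remove1 b \<gamma>) \<subseteq> {1..d}"
      using Cons.prems(2) set_remove1_subset by fastforce
    ultimately show ?thesis
      using Cons by (simp add: ip_fock_vec_Cons)
  qed (use Cons.prems in \<open>simp add: ip_fock_vec_Cons\<close>)
qed

lemma ip_fock_vec_snoc: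
  assumes "j \<in> {1..d}" and "set \<beta> \<subseteq> {1..d}" and "set \<gamma> \<subseteq> {1..d}"
    and "length \<beta> = length \<gamma>"
  shows "ip (e (\<beta> @ [j])) (e (\<gamma> @ [j])) = ip (e \<beta>) (e \<gamma>)"
  using assms(2-4)
proof (induction \<beta> arbitrary: \<gamma>)
  case Nil
  then show ?case by (simp add: fock_vec_def ip_S_left[OF assms(1)] isom[OF assms(1)])
next
  case (Cons b \<beta>)
  have sets: "set ((b # \<beta>) @ [j]) \<subseteq> {1..d}" "set (\<gamma> @ [j]) \<subseteq> {1..d}"
    using Cons.prems assms(1) by auto
  consider (occurs) "b \<in> set \<gamma>" | (last) "b \<notin> set \<gamma>" "b = j" | (absent) "b \<notin> set \<gamma>" "b \<noteq> j"
    by blast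
  then show ?case
  proof cases
    case occurs
    have "set (remove1 b \<gamma>) \<subseteq> {1..d}" "length \<beta> = length (remove1 b \<gamma>)"
      using Cons.prems occurs set_remove1_subset by (fastforce simp: length_remove1)+
    then have "ip (e (\<beta> @ [j])) (e (remove1 b \<gamma> @ [j])) = ip (e \<beta>) (e (remove1 b \<gamma>))"
      using Cons.IH Cons.prems(1) by simp
    then show ?thesis
      using occurs sets Cons.prems
      by (simp add: ip_fock_vec_Cons takeWhile_append1 remove1_append)
  next
    case last
    \<comment> \<open>the only surviving term pairs a word containing j with \<gamma>, which does not contain j\<close>
    have "ip (e (\<beta> @ [j])) (e \<gamma>) = 0"
      using last Cons.prems assms(1)
      by (intro fock_vec_orthogonal) (auto dest!: arg_cong[where f = set_mset])
    then show ?thesis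
      using last sets Cons.prems by (simp add: ip_fock_vec_Cons remove1_append)
  next
    case absent
    then show ?thesis
      using sets Cons.prems by (simp add: ip_fock_vec_Cons)
  qed
qed

end

theorem mainTheorem2:
  fixes d :: nat and q :: "nat \<Rightarrow> nat \<Rightarrow> complex"
    and sm :: "complex \<Rightarrow> 'h::ab_group_add \<Rightarrow> 'h" and ip :: "'h \<Rightarrow> 'h \<Rightarrow> complex"
    and S Sadj :: "nat \<Rightarrow> 'h \<Rightarrow> 'h" and \<Omega> :: 'h
  assumes d: "d \<ge> 2"
    and q_small: "\<And>i j. i \<in> {1..d} \<Longrightarrow> j \<in> {1..d} \<Longrightarrow> i \<noteq> j \<Longrightarrow> cmod (q i j) < 1"
    and q_herm: "\<And>i j. i \<in> {1..d} \<Longrightarrow> j \<in> {1..d} \<Longrightarrow> i \<noteq> j \<Longrightarrow> q i j = cnj (q j i)"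
    and hilbert: "complex_hilbert_space sm ip"
    and ops: "\<And>i. i \<in> {1..d} \<Longrightarrow> bounded_op_with_adjoint sm ip (S i) (Sadj i)"
    and isom: "\<And>i x. i \<in> {1..d} \<Longrightarrow> Sadj i (S i x) = x"
    and comm: "\<And>i j x. i \<in> {1..d} \<Longrightarrow> j \<in> {1..d} \<Longrightarrow> i \<noteq> j \<Longrightarrow>
                 Sadj i (S j x) = sm (q i j) (S j (Sadj i x))"
    and vac_unit: "ip \<Omega> \<Omega> = 1"
    and vac: "\<And>j. j \<in> {1..d} \<Longrightarrow> Sadj j \<Omega> = 0"
    and dense: "hdense ip (hspan sm (fock_vec S \<Omega> ` (\<Union>m. Lambda d m)))"
  shows "\<forall>k. \<forall>j\<in>{1..d}. \<forall>\<beta>\<in>Lambda d k. \<forall>\<gamma>\<in>Lambda d k.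
           ip (fock_vec S \<Omega> (\<beta> @ [j])) (fock_vec S \<Omega> (\<gamma> @ [j])) =
           ip (fock_vec S \<Omega> \<beta>) (fock_vec S \<Omega> \<gamma>)"
proof -
  interpret q_commuting_isometries d q sm ip S Sadj \<Omega>
    using hilbert ops isom comm vac unfolding complex_hilbert_space_def
    by unfold_locales auto
  show ?thesis
    unfolding Lambda_def by (auto intro!: ip_fock_vec_snoc)
qed

end
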